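(* Let $S$ and $Y$ be binary and fix constants $c_1,c_2\in[0,1]$. Fix the observed conditional distributions $P(Y=y,S=s\mid T=t)$, $y,s,t\in\{0,1\}$, and write $P_{ys|t}=P(Y=y,S=s\mid T=t)$. Consider all joint distributions of $(S_0,S_1,Y_{00},Y_{01},Y_{10},Y_{11})$ on $\{0,1\}^6$ that are compatible with the observed distributions and satisfy $\mathrm{HR}(T\to S)\le c_1$ and $\mathrm{HR}(S\to Y\mid T=t)\le c_2$ for $t=0,1$, and assume this set is nonempty. Define $$L=\max\{L_1,L_2,L_3,L_4\},\quad L_1=0,\ L_2=P_{11|0}-P_{11|1}-c_1,\ L_3=P(Y=0\mid T=1)-P(Y=0\mid T=0),\ L_4=P_{00|1}-P_{00|0}-c_1,$$ $$U=\min\{U_1,U_2,U_3,U_4\},\quad U_1=P(Y=1\mid T=0),\ U_2=c_1+P_{10|0}+P_{01|1},\ U_3=P(Y=0\mid T=1),\ U_4=1+c_1-P_{01|0}-P_{10|1}.$$ Then every such joint distribution satisfies $L\le \mathrm{HR}(T\to Y)\le U$. Moreover the bounds are sharp: both $L$ and $U$ are attained by joint distributions in this set. In particular, the sharp bounds do not depend on $c_2$.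
   Context: Binary treatment $T\in\{0,1\}$. For $t\in\{0,1\}$, $S_t$ is the potential surrogate under treatment $t$, and for $t$ and surrogate level $s$, $Y_{ts}$ is the potential primary outcome when $T$ is set to $t$ and $S$ to $s$; write $Y_{T=t}=Y_{tS_t}$. The treatment is randomized: $T$ is independent of $(S_0,S_1,(Y_{ts})_{t,s})$, so the observed data determine $P(Y=y,S=s\mid T=t)=P(Y_{tS_t}=y,S_t=s)$. A joint distribution of the potential outcomes is "compatible" with given observed distributions if it induces, for each $t$, the given law of $(Y_{tS_t},S_t)$. Harm rates: $\mathrm{HR}(T\to S)=P(S_0>S_1)$ (for binary $S$: $P(S_0=1,S_1=0)$); $\mathrm{HR}(T\to Y)=P(Y_{0S_0}>Y_{1S_1})$ (for binary $Y$: $P(Y_{0S_0}=1,Y_{1S_1}=0)$); for binary $S,Y$, $\mathrm{HR}(S\to Y\mid T=t)=P(Y_{t0}=1,Y_{t1}=0)$. *)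

theory Defs
  imports Complex_Main
begin

text \<open>Binary variables are encoded as bool (True = 1, False = 0).
  A point of the potential-outcome space {0,1}^6 is a tuple
  (S0, S1, Y00, Y01, Y10, Y11).\<close>

type_synonym outcome = "bool \<times> bool \<times> bool \<times> bool \<times> bool \<times> bool"

definition S_pot :: "bool \<Rightarrow> outcome \<Rightarrow> bool" where
  "S_pot t w = (case w of (s0, s1, _, _, _, _) \<Rightarrow> if t then s1 else s0)"

definition Y_pot :: "bool \<Rightarrow> bool \<Rightarrow> outcome \<Rightarrow> bool" where
  "Y_pot t s w = (case w of (_, _, y00, y01, y10, y11) \<Rightarrow>
     if t then (if s then y11 else y10) else (if s then y01 else y00))"

definition Y_T :: "bool \<Rightarrow> outcome \<Rightarrow> bool" where
  "Y_T t w = Y_pot t (S_pot t w) w"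

definition is_pmf :: "(outcome \<Rightarrow> real) \<Rightarrow> bool" where
  "is_pmf p \<longleftrightarrow> (\<forall>w. 0 \<le> p w) \<and> (\<Sum>w\<in>UNIV. p w) = 1"

definition Pr :: "(outcome \<Rightarrow> real) \<Rightarrow> (outcome \<Rightarrow> bool) \<Rightarrow> real" where
  "Pr p E = (\<Sum>w\<in>{w. E w}. p w)"

text \<open>Observed data: Pobs y s t = P(Y=y, S=s | T=t).  Compatibility:
  for each t, the law of (Y_{t S_t}, S_t) equals the observed law.\<close>
definition compatible :: "(bool \<Rightarrow> bool \<Rightarrow> bool \<Rightarrow> real) \<Rightarrow> (outcome \<Rightarrow> real) \<Rightarrow> bool" where
  "compatible Pobs p \<longleftrightarrow> is_pmf p \<and>
     (\<forall>t y s. Pr p (\<lambda>w. Y_T t w = y \<and> S_pot t w = s) = Pobs y s t)"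

definition HR_TS :: "(outcome \<Rightarrow> real) \<Rightarrow> real" where
  "HR_TS p = Pr p (\<lambda>w. S_pot False w \<and> \<not> S_pot True w)"

definition HR_SY :: "(outcome \<Rightarrow> real) \<Rightarrow> bool \<Rightarrow> real" where
  "HR_SY p t = Pr p (\<lambda>w. Y_pot t False w \<and> \<not> Y_pot t True w)"

definition HR_TY :: "(outcome \<Rightarrow> real) \<Rightarrow> real" where
  "HR_TY p = Pr p (\<lambda>w. Y_T False w \<and> \<not> Y_T True w)"

definition admissible ::
  "(bool \<Rightarrow> bool \<Rightarrow> bool \<Rightarrow> real) \<Rightarrow> real \<Rightarrow> real \<Rightarrow> (outcome \<Rightarrow> real) set" where
  "admissible Pobs c1 c2 = {p. compatible Pobs p \<and> HR_TS p \<le> c1 \<and>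
      (\<forall>t. HR_SY p t \<le> c2)}"

definition PY :: "(bool \<Rightarrow> bool \<Rightarrow> bool \<Rightarrow> real) \<Rightarrow> bool \<Rightarrow> bool \<Rightarrow> real" where
  "PY Pobs y t = Pobs y False t + Pobs y True t"

definition lowerL :: "(bool \<Rightarrow> bool \<Rightarrow> bool \<Rightarrow> real) \<Rightarrow> real \<Rightarrow> real" where
  "lowerL Pobs c1 = Max {0,
      Pobs True True False - Pobs True True True - c1,
      PY Pobs False True - PY Pobs False False,
      Pobs False False True - Pobs False False False - c1}"

definition upperU :: "(bool \<Rightarrow> bool \<Rightarrow> bool \<Rightarrow> real) \<Rightarrow> real \<Rightarrow> real" where
  "upperU Pobs c1 = Min {PY Pobs True False,
      c1 + Pobs True False False + Pobs False True True,
      PY Pobs False True,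
      1 + c1 - Pobs False True False - Pobs True False True}"

end

theory Submission
  imports Defs
begin

text \<open>HR(T\<rightarrow>Y), compatibility and the bound on HR(T\<rightarrow>S) depend on a joint distribution only
  through the law of (Y_{T=0}, S_0, Y_{T=1}, S_1), a coupling of the two observed laws of (Y, S)
  with P(S_0 = 1, S_1 = 0) \<le> c1. Conversely, every such coupling comes from an admissible
  distribution in which Y_{ts} does not depend on s; then HR(S\<rightarrow>Y | T=t) = 0. The upper bound U is the largest harm P(Y_{T=0} = 1, Y_{T=1} = 0) of such a coupling:
  four counting inequalities show that no coupling does better, and U is attained by first
  choosing the coupling of S_0 and S_1 and then routing a maximal flow through its 2\<times>2 cells,
  all of whose cuts are at least U. Relabelling Y_{T=1} as 1 - Y_{T=1} turns the harm into
  P(Y_{T=0} = 1) minus the harm, which reduces the lower bound L to the upper bound.\<close>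

text \<open>Q y0 s0 y1 s1 is a joint law of (Y_{T=0}, S_0, Y_{T=1}, S_1); A and B are the laws of (Y, S)
  given T = 0 and T = 1.\<close>

definition compatible_coupling ::
  "(bool \<Rightarrow> bool \<Rightarrow> real) \<Rightarrow> (bool \<Rightarrow> bool \<Rightarrow> real) \<Rightarrow> real \<Rightarrow>
    (bool \<Rightarrow> bool \<Rightarrow> bool \<Rightarrow> bool \<Rightarrow> real) \<Rightarrow> bool" where
  "compatible_coupling A B c Q \<longleftrightarrow> (\<forall>y0 s0 y1 s1. 0 \<le> Q y0 s0 y1 s1)
     \<and> (\<forall>y0 s0. (\<Sum>y1\<in>UNIV. \<Sum>s1\<in>UNIV. Q y0 s0 y1 s1) = A y0 s0)
     \<and> (\<forall>y1 s1. (\<Sum>y0\<in>UNIV. \<Sum>s0\<in>UNIV. Q y0 s0 y1 s1) = B y1 s1)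
     \<and> (\<Sum>y0\<in>UNIV. \<Sum>y1\<in>UNIV. Q y0 True y1 False) \<le> c"

definition coupling_harm :: "(bool \<Rightarrow> bool \<Rightarrow> bool \<Rightarrow> bool \<Rightarrow> real) \<Rightarrow> real" where
  "coupling_harm Q = (\<Sum>s0\<in>UNIV. \<Sum>s1\<in>UNIV. Q True s0 False s1)"

definition max_harm ::
  "(bool \<Rightarrow> bool \<Rightarrow> real) \<Rightarrow> (bool \<Rightarrow> bool \<Rightarrow> real) \<Rightarrow> real \<Rightarrow> real" where
  "max_harm A B c = min (min (A True True + A True False) (c + A True False + B False True))
     (min (B False True + B False False) (1 + c - A False True - B True False))"

definition flip_Y1 ::
  "(bool \<Rightarrow> bool \<Rightarrow> bool \<Rightarrow> bool \<Rightarrow> real) \<Rightarrow> bool \<Rightarrow> bool \<Rightarrow> bool \<Rightarrow> bool \<Rightarrow> real" where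
  "flip_Y1 Q y0 s0 y1 s1 = Q y0 s0 (\<not> y1) s1"

lemmas coupling_expand = compatible_coupling_def coupling_harm_def UNIV_bool all_bool_eq

lemma coupling_harm_le_max_harm:
  assumes "compatible_coupling A B c Q" and "(\<Sum>y\<in>UNIV. \<Sum>s\<in>UNIV. A y s) = 1"
  shows "coupling_harm Q \<le> max_harm A B c"
  using assms unfolding max_harm_def min.bounded_iff
  by (simp add: coupling_expand)

lemma compatible_coupling_flip_Y1:
  assumes "compatible_coupling A B c Q"
  shows "compatible_coupling A (\<lambda>y s. B (\<not> y) s) c (flip_Y1 Q)"
  using assms by (simp add: coupling_expand flip_Y1_def ac_simps)

lemma coupling_harm_flip_Y1:
  assumes "compatible_coupling A B c Q"
  shows "coupling_harm (flip_Y1 Q) = (\<Sum>s\<in>UNIV. A True s) - coupling_harm Q"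
  using assms by (simp add: coupling_expand flip_Y1_def)

lemma compatible_coupling_feasible:
  assumes "compatible_coupling A B c Q"
  shows "0 \<le> c" "\<forall>y s. 0 \<le> A y s" "\<forall>y s. 0 \<le> B y s"
    "(\<Sum>y\<in>UNIV. \<Sum>s\<in>UNIV. B y s) = (\<Sum>y\<in>UNIV. \<Sum>s\<in>UNIV. A y s)"
    "(\<Sum>y\<in>UNIV. A y True) - (\<Sum>y\<in>UNIV. B y True) \<le> c"
  using assms by (simp_all add: coupling_expand)

text \<open>Greedy flow on a path of three edges carrying x, y, z: x is capped by p and e1, z by r and
  e2, y by q, and the pairs x, y and y, z share the capacities s1 and s2. The inequalities
  \<open>cuts\<close> are the minimal cuts of this path.\<close>

lemma path_greedy_flow:
  fixes p e1 s1 q s2 r e2 U :: real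
  assumes x: "x = min p (min e1 s1)" and z: "z = min r (min e2 s2)"
    and y: "y = min q (min (s1 - x) (s2 - z))" and "0 \<le> q"
    and cuts: "\<forall>cx\<in>{p, e1}. \<forall>cz\<in>{r, e2}. U \<le> cx + q + cz \<and> U \<le> cx + s2 \<and> U \<le> s1 + cz"
      "U \<le> s1 + s2"
  shows "U \<le> x + y + z"
proof -
  have "U \<le> p + q + r" "U \<le> p + q + e2" "U \<le> e1 + q + r" "U \<le> e1 + q + e2"
    "U \<le> p + s2" "U \<le> e1 + s2" "U \<le> s1 + r" "U \<le> s1 + e2"
    using cuts(1) by auto
  then show ?thesis using cuts(2) \<open>0 \<le> q\<close> unfolding x y z min_def by (smt (verit))
qed

text \<open>Cell (0,1) is filled first, as much as possible but no more than a0 + b1 + m10 - U, so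
  that every cut of the remaining path (1,1), (1,0), (0,0) still has capacity at least
  U - w01.\<close>

lemma greedy_flow_2x2:
  fixes a1 a0 b1 b0 m11 m10 m01 m00 U :: real
  assumes nonneg: "0 \<le> a1" "0 \<le> a0" "0 \<le> b1" "0 \<le> b0" "0 \<le> m11" "0 \<le> m10" "0 \<le> m01" "0 \<le> m00"
    and cuts: "U \<le> a1 + a0" "U \<le> b1 + b0" "U \<le> m11 + m10 + m01 + m00"
      "U \<le> a1 + m01 + m00" "U \<le> a0 + m11 + m10" "U \<le> b1 + m10 + m00" "U \<le> b0 + m11 + m01"
      "U \<le> a1 + b1 + m00" "U \<le> a1 + b0 + m01" "U \<le> a0 + b1 + m10" "U \<le> a0 + b0 + m11"
  shows "\<exists>w11 w10 w01 w00. 0 \<le> w11 \<and> w11 \<le> m11 \<and> 0 \<le> w10 \<and> w10 \<le> m10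
    \<and> 0 \<le> w01 \<and> w01 \<le> m01 \<and> 0 \<le> w00 \<and> w00 \<le> m00
    \<and> w11 + w10 \<le> a1 \<and> w01 + w00 \<le> a0 \<and> w11 + w01 \<le> b1 \<and> w10 + w00 \<le> b0
    \<and> U \<le> w11 + w10 + w01 + w00"
proof -
  define w01 where "w01 = max 0 (min (min m01 a0) (min b1 (a0 + b1 + m10 - U)))"
  define w11 where "w11 = min m11 (min (b1 - w01) a1)"
  define w00 where "w00 = min m00 (min (a0 - w01) b0)"
  define w10 where "w10 = min m10 (min (a1 - w11) (b0 - w00))"
  have w01: "0 \<le> w01" "w01 \<le> m01" "w01 \<le> a0" "w01 \<le> b1" "w01 \<le> a0 + b1 + m10 - U"
    "w01 = m01 \<or> w01 = a0 \<or> w01 = b1 \<or> a0 + b1 + m10 - U \<le> w01"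
    using cuts nonneg unfolding w01_def by (auto simp: min_def max_def)
  have w11: "0 \<le> w11" "w11 \<le> m11" "w11 \<le> b1 - w01" "w11 \<le> a1"
    using w01 nonneg unfolding w11_def by (auto simp: min_def)
  have w00: "0 \<le> w00" "w00 \<le> m00" "w00 \<le> a0 - w01" "w00 \<le> b0"
    using w01 nonneg unfolding w00_def by (auto simp: min_def)
  have w10: "0 \<le> w10" "w10 \<le> m10" "w10 \<le> a1 - w11" "w10 \<le> b0 - w00"
    using w11 w00 nonneg unfolding w10_def by (auto simp: min_def)
  have "U - w01 \<le> w11 + w10 + w00"
  proof (rule path_greedy_flow[OF w11_def w00_def w10_def \<open>0 \<le> m10\<close>])
    have "U \<le> w01 + (m11 + m10 + m00)" "U \<le> w01 + (m11 + b0)"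
      "U \<le> w01 + (a1 + m00)" "U \<le> w01 + (a1 + b0)"
      using w01 cuts nonneg by (elim disjE; linarith)+
    then show "\<forall>cx\<in>{m11, b1 - w01}. \<forall>cz\<in>{m00, a0 - w01}. U - w01 \<le> cx + m10 + cz
        \<and> U - w01 \<le> cx + b0 \<and> U - w01 \<le> a1 + cz" "U - w01 \<le> a1 + b0"
      using w01(1-5) cuts nonneg by auto
  qed
  then show ?thesis
    using w01 w11 w00 w10 by (intro exI[of _ w11] exI[of _ w10] exI[of _ w01] exI[of _ w00]) simp
qed

text \<open>Max-flow min-cut for the network source \<rightarrow> row i (capacity \<alpha> i) \<rightarrow> cell (i, j)
  (capacity m i j) \<rightarrow> column j (capacity \<beta> j) \<rightarrow> sink.\<close>

lemma bipartite_flow_2x2: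
  fixes \<alpha> \<beta> :: "bool \<Rightarrow> real" and m :: "bool \<Rightarrow> bool \<Rightarrow> real"
  assumes "\<forall>i. 0 \<le> \<alpha> i" "\<forall>j. 0 \<le> \<beta> j" "\<forall>i j. 0 \<le> m i j"
    and cut: "\<forall>R C. U \<le> (\<Sum>i\<in>R. \<alpha> i) + (\<Sum>j\<in>C. \<beta> j) + (\<Sum>i\<in>-R. \<Sum>j\<in>-C. m i j)"
  shows "\<exists>w. (\<forall>i j. 0 \<le> w i j \<and> w i j \<le> m i j) \<and> (\<forall>i. w i True + w i False \<le> \<alpha> i)
    \<and> (\<forall>j. w True j + w False j \<le> \<beta> j) \<and> U \<le> (\<Sum>i\<in>UNIV. \<Sum>j\<in>UNIV. w i j)"
proof -
  have nonneg: "0 \<le> \<alpha> True" "0 \<le> \<alpha> False" "0 \<le> \<beta> True" "0 \<le> \<beta> False"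
    "0 \<le> m True True" "0 \<le> m True False" "0 \<le> m False True" "0 \<le> m False False"
    using assms(1-3) by simp_all
  have cuts: "U \<le> \<alpha> True + \<alpha> False" "U \<le> \<beta> True + \<beta> False"
    "U \<le> m True True + m True False + m False True + m False False"
    "U \<le> \<alpha> True + m False True + m False False" "U \<le> \<alpha> False + m True True + m True False"
    "U \<le> \<beta> True + m True False + m False False" "U \<le> \<beta> False + m True True + m False True"
    "U \<le> \<alpha> True + \<beta> True + m False False" "U \<le> \<alpha> True + \<beta> False + m False True"
    "U \<le> \<alpha> False + \<beta> True + m True False" "U \<le> \<alpha> False + \<beta> False + m True True"
    using cut[rule_format, of UNIV "{}"] cut[rule_format, of "{}" UNIV] cut[rule_format, of "{}" "{}"]
      cut[rule_format, of "{True}" "{}"] cut[rule_format, of "{False}" "{}"]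
      cut[rule_format, of "{}" "{True}"] cut[rule_format, of "{}" "{False}"]
      cut[rule_format, of "{True}" "{True}"] cut[rule_format, of "{True}" "{False}"]
      cut[rule_format, of "{False}" "{True}"] cut[rule_format, of "{False}" "{False}"]
    by (simp_all add: UNIV_bool Compl_eq_Diff_UNIV insert_Diff_if)
  then obtain w11 w10 w01 w00 where "0 \<le> w11 \<and> w11 \<le> m True True \<and> 0 \<le> w10 \<and> w10 \<le> m True False
    \<and> 0 \<le> w01 \<and> w01 \<le> m False True \<and> 0 \<le> w00 \<and> w00 \<le> m False False
    \<and> w11 + w10 \<le> \<alpha> True \<and> w01 + w00 \<le> \<alpha> False \<and> w11 + w01 \<le> \<beta> True \<and> w10 + w00 \<le> \<beta> False
    \<and> U \<le> w11 + w10 + w01 + w00"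
    using greedy_flow_2x2[OF nonneg cuts] by blast
  then show ?thesis
    by (intro exI[of _ "\<lambda>i j. if i then if j then w11 else w10 else if j then w01 else w00"])
      (simp add: UNIV_bool all_bool_eq)
qed

lemma exists_between_with_row_sums:
  fixes l u :: "bool \<Rightarrow> bool \<Rightarrow> real" and a :: "bool \<Rightarrow> real"
  assumes "\<forall>i j. l i j \<le> u i j"
    and "\<forall>i. l i True + l i False \<le> a i \<and> a i \<le> u i True + u i False"
  shows "\<exists>x. (\<forall>i j. l i j \<le> x i j \<and> x i j \<le> u i j) \<and> (\<forall>i. x i True + x i False = a i)"
proof -
  define x1 where "x1 i = max (l i True) (a i - u i False)" for i
  show ?thesis
  proof (intro exI[of _ "\<lambda>i j. if j then x1 i else a i - x1 i"] conjI allI)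
    fix i j
    have "l i True \<le> u i True" "l i False \<le> u i False"
      "l i True + l i False \<le> a i" "a i \<le> u i True + u i False"
      using assms by auto
    then show "l i j \<le> (if j then x1 i else a i - x1 i)" "(if j then x1 i else a i - x1 i) \<le> u i j"
      by (auto simp: x1_def)
  qed simp
qed

lemma compatible_coupling_of_flow:
  fixes A B M w :: "bool \<Rightarrow> bool \<Rightarrow> real"
  assumes A: "\<forall>y s. 0 \<le> A y s" and B: "\<forall>y s. 0 \<le> B y s"
    and M: "\<forall>i j. 0 \<le> M i j" "\<forall>i. M i True + M i False = (\<Sum>y\<in>UNIV. A y i)"
      "\<forall>j. M True j + M False j = (\<Sum>y\<in>UNIV. B y j)" "M True False \<le> c"
    and w: "\<forall>i j. 0 \<le> w i j \<and> w i j \<le> M i j" "\<forall>i. w i True + w i False \<le> A True i"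
      "\<forall>j. w True j + w False j \<le> B False j"
  shows "\<exists>Q. compatible_coupling A B c Q \<and> (\<Sum>i\<in>UNIV. \<Sum>j\<in>UNIV. w i j) \<le> coupling_harm Q"
proof -
  obtain x where x: "\<forall>i j. w i j \<le> x i j \<and> x i j \<le> M i j" "\<forall>i. x i True + x i False = A True i"
    using exists_between_with_row_sums[of w M "A True"] w M A by (auto simp: UNIV_bool)
  obtain z' where z': "\<forall>j i. w i j \<le> z' j i \<and> z' j i \<le> M i j" "\<forall>j. z' j True + z' j False = B False j"
    using exists_between_with_row_sums[of "\<lambda>j i. w i j" "\<lambda>j i. M i j" "B False"] w M B
    by (auto simp: UNIV_bool)
  define t where "t i j = max (w i j) (x i j + z' j i - M i j)" for i j
  define Q where "Q y0 i y1 j = (if y0 then if y1 then x i j - t i j else t i j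
      else if y1 then M i j - x i j - z' j i + t i j else z' j i - t i j)" for y0 i y1 j
  have t: "\<forall>i j. w i j \<le> t i j \<and> x i j + z' j i - M i j \<le> t i j \<and> t i j \<le> x i j \<and> t i j \<le> z' j i"
    using x z' by (auto simp: t_def)
  have "compatible_coupling A B c Q"
    using x z' w M t unfolding Q_def by (simp add: coupling_expand)
  moreover have "(\<Sum>i\<in>UNIV. \<Sum>j\<in>UNIV. w i j) \<le> coupling_harm Q"
    using t unfolding Q_def by (simp add: coupling_expand)
  ultimately show ?thesis by blast
qed

lemma bool_set_cases: "(R :: bool set) = {} \<or> R = {True} \<or> R = {False} \<or> R = UNIV"
proof -
  have "R \<in> Pow {False, True}" by (simp add: UNIV_bool[symmetric])
  then show ?thesis by (auto simp: Pow_insert UNIV_bool)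
qed

lemma S_coupling_with_large_cuts:
  assumes A: "\<forall>y s. 0 \<le> A y s" and B: "\<forall>y s. 0 \<le> B y s"
    and sum_A: "(\<Sum>y\<in>UNIV. \<Sum>s\<in>UNIV. A y s) = 1" and sum_B: "(\<Sum>y\<in>UNIV. \<Sum>s\<in>UNIV. B y s) = 1"
    and feasible: "(\<Sum>y\<in>UNIV. A y True) - (\<Sum>y\<in>UNIV. B y True) \<le> c" and "0 \<le> c"
  shows "\<exists>M. (\<forall>i j. 0 \<le> M i j) \<and> (\<forall>i. M i True + M i False = (\<Sum>y\<in>UNIV. A y i))
    \<and> (\<forall>j. M True j + M False j = (\<Sum>y\<in>UNIV. B y j)) \<and> M True False \<le> c
    \<and> (\<forall>R C. max_harm A B c \<le> (\<Sum>i\<in>R. A True i) + (\<Sum>j\<in>C. B False j) + (\<Sum>i\<in>-R. \<Sum>j\<in>-C. M i j))"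
proof -
  have nonneg: "0 \<le> A True True" "0 \<le> A True False" "0 \<le> A False True" "0 \<le> A False False"
    "0 \<le> B True True" "0 \<le> B True False" "0 \<le> B False True" "0 \<le> B False False"
    using A B by auto
  define U where "U = max_harm A B c"
  \<comment> \<open>k = M True False is as large as c allows, subject to the two cuts that decrease in k.\<close>
  define k where "k = min (min c (A True True + A False True)) (min (B True False + B False False)
    (min (A True True + B False True + B True False + B False False - U)
      (A True True + A True False + A False True + B False False - U)))"
  define M where "M i j = (if i then if j then A True True + A False True - k else k
    else if j then B True True + B False True - A True True - A False True + k
    else B True False + B False False - k)" for i j
  have U: "U \<le> A True True + A True False" "U \<le> c + A True False + B False True"
    "U \<le> B False True + B False False" "U \<le> 1 + c - A False True - B True False"
    unfolding U_def max_harm_def by auto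
  have k: "k \<le> c" "k \<le> A True True + A False True" "k \<le> B True False + B False False"
    "k \<le> A True True + B False True + B True False + B False False - U" "k \<le> A True True + A True False + A False True + B False False - U"
    "0 \<le> k" "A True True + A False True - B True True - B False True \<le> k"
    "U - A True False - B False True \<le> k" "U - 1 + B True False + A False True \<le> k"
    unfolding k_def min.bounded_iff using U nonneg sum_A sum_B feasible \<open>0 \<le> c\<close>
    by (simp_all add: UNIV_bool)
  have "\<forall>R C. U \<le> (\<Sum>i\<in>R. A True i) + (\<Sum>j\<in>C. B False j) + (\<Sum>i\<in>-R. \<Sum>j\<in>-C. M i j)"
  proof (intro allI)
    fix R C :: "bool set"
    show "U \<le> (\<Sum>i\<in>R. A True i) + (\<Sum>j\<in>C. B False j) + (\<Sum>i\<in>-R. \<Sum>j\<in>-C. M i j)"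
      using bool_set_cases[of R] bool_set_cases[of C] U k nonneg sum_A sum_B
      by (elim disjE; simp add: M_def UNIV_bool Compl_eq_Diff_UNIV insert_Diff_if; linarith)
  qed
  moreover have "\<forall>i j. 0 \<le> M i j" using k nonneg sum_A sum_B by (simp add: M_def UNIV_bool all_bool_eq)
  ultimately show ?thesis
    using k sum_A sum_B unfolding U_def by (intro exI[of _ M]) (simp add: M_def UNIV_bool all_bool_eq)
qed

lemma max_harm_attained:
  assumes Q0: "compatible_coupling A B c Q0" and sum_A: "(\<Sum>y\<in>UNIV. \<Sum>s\<in>UNIV. A y s) = 1"
  shows "\<exists>Q. compatible_coupling A B c Q \<and> coupling_harm Q = max_harm A B c"
proof -
  note feasible = compatible_coupling_feasible[OF Q0]
  have sum_B: "(\<Sum>y\<in>UNIV. \<Sum>s\<in>UNIV. B y s) = 1" using feasible(4) sum_A by simp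
  obtain M where M: "\<forall>i j. 0 \<le> M i j" "\<forall>i. M i True + M i False = (\<Sum>y\<in>UNIV. A y i)"
      "\<forall>j. M True j + M False j = (\<Sum>y\<in>UNIV. B y j)" "M True False \<le> c"
    and cuts: "\<forall>R C. max_harm A B c \<le> (\<Sum>i\<in>R. A True i) + (\<Sum>j\<in>C. B False j) + (\<Sum>i\<in>-R. \<Sum>j\<in>-C. M i j)"
    using S_coupling_with_large_cuts[OF feasible(2,3) sum_A sum_B feasible(5,1)] by blast
  obtain w where w: "\<forall>i j. 0 \<le> w i j \<and> w i j \<le> M i j" "\<forall>i. w i True + w i False \<le> A True i"
      "\<forall>j. w True j + w False j \<le> B False j" "max_harm A B c \<le> (\<Sum>i\<in>UNIV. \<Sum>j\<in>UNIV. w i j)"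
    using bipartite_flow_2x2[OF _ _ M(1) cuts] feasible(2,3) by blast
  obtain Q where "compatible_coupling A B c Q" "(\<Sum>i\<in>UNIV. \<Sum>j\<in>UNIV. w i j) \<le> coupling_harm Q"
    using compatible_coupling_of_flow[OF feasible(2,3) M w(1-3)] by blast
  then show ?thesis
    using w(4) coupling_harm_le_max_harm[OF _ sum_A] by (intro exI[of _ Q]) (simp add: order_antisym)
qed

text \<open>Y_{t0} = Y_{t1} makes HR(S\<rightarrow>Y | T=t) vanish.\<close>

definition outcome_law :: "(bool \<Rightarrow> bool \<Rightarrow> bool \<Rightarrow> bool \<Rightarrow> real) \<Rightarrow> outcome \<Rightarrow> real" where
  "outcome_law Q = (\<lambda>(s0, s1, y00, y01, y10, y11). if y00 = y01 \<and> y10 = y11 then Q y00 s0 y10 s1 else 0)"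

definition potential_YS_law :: "(outcome \<Rightarrow> real) \<Rightarrow> bool \<Rightarrow> bool \<Rightarrow> bool \<Rightarrow> bool \<Rightarrow> real" where
  "potential_YS_law p y0 s0 y1 s1 =
     Pr p (\<lambda>w. Y_T False w = y0 \<and> S_pot False w = s0 \<and> Y_T True w = y1 \<and> S_pot True w = s1)"

lemma sum_outcome:
  "(\<Sum>w\<in>(UNIV::outcome set). f w) =
    (\<Sum>a\<in>UNIV. \<Sum>b\<in>UNIV. \<Sum>c\<in>UNIV. \<Sum>d\<in>UNIV. \<Sum>e\<in>UNIV. \<Sum>g\<in>UNIV. f (a, b, c, d, e, g))"
  by (simp add: UNIV_Times_UNIV[symmetric] sum.cartesian_product del: UNIV_Times_UNIV)

lemma Pr_eq_sum_if: "Pr p E = (\<Sum>w\<in>UNIV. if E w then p w else 0)"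
  unfolding Pr_def by (simp add: sum.If_cases)

lemmas outcome_expand = Pr_eq_sum_if sum_outcome UNIV_bool Y_T_def Y_pot_def S_pot_def

lemma outcome_law_admissible:
  assumes "compatible_coupling (\<lambda>y s. Pobs y s False) (\<lambda>y s. Pobs y s True) c1 Q"
    and "(\<Sum>y\<in>UNIV. \<Sum>s\<in>UNIV. Pobs y s False) = 1" and "0 \<le> c2"
  shows "outcome_law Q \<in> admissible Pobs c1 c2" "HR_TY (outcome_law Q) = coupling_harm Q"
  using assms
  unfolding admissible_def compatible_def is_pmf_def HR_TS_def HR_SY_def HR_TY_def outcome_law_def
  by (simp_all add: outcome_expand coupling_expand)

lemma admissible_potential_YS_law:
  assumes "p \<in> admissible Pobs c1 c2"
  shows "compatible_coupling (\<lambda>y s. Pobs y s False) (\<lambda>y s. Pobs y s True) c1 (potential_YS_law p)"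
    "HR_TY p = coupling_harm (potential_YS_law p)"
    "(\<Sum>y\<in>UNIV. \<Sum>s\<in>UNIV. Pobs y s False) = 1"
  using assms
  unfolding admissible_def compatible_def is_pmf_def HR_TS_def HR_TY_def potential_YS_law_def
  by (simp_all add: outcome_expand coupling_expand)

lemma diff_min_eq_max: "(a :: 'a :: linordered_ab_group_add) - min x y = max (a - x) (a - y)"
  unfolding diff_conv_add_uminus minus_min_eq_max max_add_distrib_right ..

lemma upperU_eq_max_harm:
  "upperU Pobs c1 = max_harm (\<lambda>y s. Pobs y s False) (\<lambda>y s. Pobs y s True) c1"
  unfolding upperU_def max_harm_def PY_def by (simp add: min.assoc ac_simps)

lemma lowerL_eq_max_harm_flip:
  assumes sum0: "(\<Sum>y\<in>UNIV. \<Sum>s\<in>UNIV. Pobs y s False) = 1"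
    and sum1: "(\<Sum>y\<in>UNIV. \<Sum>s\<in>UNIV. Pobs y s True) = 1"
  shows "lowerL Pobs c1 = (\<Sum>s\<in>UNIV. Pobs True s False)
    - max_harm (\<lambda>y s. Pobs y s False) (\<lambda>y s. Pobs (\<not> y) s True) c1"
proof -
  define a where "a = (\<Sum>s\<in>UNIV. Pobs True s False)"
  have "lowerL Pobs c1 = Max {a - a, a - (c1 + Pobs True False False + Pobs True True True),
      a - (Pobs True True True + Pobs True False True),
      a - (1 + c1 - Pobs False True False - Pobs False False True)}"
  proof -
    have "Pobs True True False - Pobs True True True - c1
        = a - (c1 + Pobs True False False + Pobs True True True)"
      "PY Pobs False True - PY Pobs False False = a - (Pobs True True True + Pobs True False True)"
      "Pobs False False True - Pobs False False False - c1
        = a - (1 + c1 - Pobs False True False - Pobs False False True)"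
      using sum0 sum1 by (simp_all add: a_def PY_def UNIV_bool)
    then show ?thesis unfolding lowerL_def by simp
  qed
  then show ?thesis
    unfolding a_def max_harm_def diff_min_eq_max by (simp add: max.assoc UNIV_bool)
qed

theorem proposition1:
  fixes Pobs :: "bool \<Rightarrow> bool \<Rightarrow> bool \<Rightarrow> real" and c1 c2 :: real
  assumes "0 \<le> c1" "c1 \<le> 1" "0 \<le> c2" "c2 \<le> 1"
    and "admissible Pobs c1 c2 \<noteq> {}"
  shows "(\<forall>p\<in>admissible Pobs c1 c2.
            lowerL Pobs c1 \<le> HR_TY p \<and> HR_TY p \<le> upperU Pobs c1)
       \<and> (\<exists>p\<in>admissible Pobs c1 c2. HR_TY p = lowerL Pobs c1)
       \<and> (\<exists>p\<in>admissible Pobs c1 c2. HR_TY p = upperU Pobs c1)"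
proof -
  obtain p0 where "p0 \<in> admissible Pobs c1 c2" using assms(5) by blast
  note law0 = admissible_potential_YS_law[OF this]
  have sum1: "(\<Sum>y\<in>UNIV. \<Sum>s\<in>UNIV. Pobs y s True) = 1"
    using compatible_coupling_feasible(4)[OF law0(1)] law0(3) by simp
  note lowerL = lowerL_eq_max_harm_flip[OF law0(3) sum1]
  have range: "lowerL Pobs c1 \<le> HR_TY p \<and> HR_TY p \<le> upperU Pobs c1"
    if "p \<in> admissible Pobs c1 c2" for p
  proof -
    note law = admissible_potential_YS_law[OF that]
    show ?thesis
      using coupling_harm_le_max_harm[OF law(1,3)]
        coupling_harm_le_max_harm[OF compatible_coupling_flip_Y1[OF law(1)] law(3)]
        coupling_harm_flip_Y1[OF law(1)] law(2) lowerL upperU_eq_max_harm by simp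
  qed
  obtain QU where QU: "compatible_coupling (\<lambda>y s. Pobs y s False) (\<lambda>y s. Pobs y s True) c1 QU"
    "coupling_harm QU = upperU Pobs c1"
    using max_harm_attained[OF law0(1,3)] upperU_eq_max_harm by metis
  have upper: "\<exists>p\<in>admissible Pobs c1 c2. HR_TY p = upperU Pobs c1"
    using outcome_law_admissible[OF QU(1) law0(3) assms(3)] QU(2) by auto
  obtain QL where QL: "compatible_coupling (\<lambda>y s. Pobs y s False) (\<lambda>y s. Pobs (\<not> y) s True) c1 QL"
    "coupling_harm QL = max_harm (\<lambda>y s. Pobs y s False) (\<lambda>y s. Pobs (\<not> y) s True) c1"
    using max_harm_attained[OF compatible_coupling_flip_Y1[OF law0(1)] law0(3)] by blast
  have QL_flip: "compatible_coupling (\<lambda>y s. Pobs y s False) (\<lambda>y s. Pobs y s True) c1 (flip_Y1 QL)"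
    "coupling_harm (flip_Y1 QL) = lowerL Pobs c1"
    using compatible_coupling_flip_Y1[OF QL(1)] coupling_harm_flip_Y1[OF QL(1)] QL(2) lowerL by simp_all
  have lower: "\<exists>p\<in>admissible Pobs c1 c2. HR_TY p = lowerL Pobs c1"
    using outcome_law_admissible[OF QL_flip(1) law0(3) assms(3)] QL_flip(2) by auto
  show ?thesis using range lower upper by blast
qed

end
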